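(* Let $A \in \mathbb{R}^{n\times d}$, $b\in\mathbb{R}^n$, and suppose $Ax=b$ admits a solution $x^*$. Let $w$ be a random variable in $\mathbb{R}^n$, $\mathcal{N}(w) = \mathrm{span}\lbrace z \in \mathbb{R}^d : \mathbb{P}[z'A'w=0]=1\rbrace$, $\mathcal{R}(w) = \mathcal{N}(w)^\perp$, and let $\mathcal{V}(w)$ be the subspace with $\mathcal{V}(w)\perp\mathcal{R}(w)$ and $\mathcal{V}(w)\oplus\mathcal{R}(w) = \mathrm{row}(A)$. Let $\lbrace w_\ell:\ell\geq 0\rbrace$ be random variables in $\mathbb{R}^n$ with $\mathbb{P}[A'w_\ell\in\mathcal{R}(w)]=1$ for all $\ell$, let $x_0\in\mathbb{R}^d$ be arbitrary and $x_{k+1} = x_k + A'w_kw_k'(b-Ax_k)/\|A'w_k\|_2^2$. Define stopping times $\tau_0=0$, $\tau_1 = \min\lbrace k\geq0 : \mathrm{span}\lbrace A'w_0,\ldots,A'w_k\rbrace = \mathcal{R}(w)\rbrace$, and for $\ell\geq 2$, $\tau_\ell = \min\lbrace k>\tau_{\ell-1} : \mathrm{span}\lbrace A'w_{\tau_{\ell-1}+1},\ldots,A'w_k\rbrace = \mathcal{R}(w)\rbrace$ if $\tau_{\ell-1}<\infty$, else $\tau_\ell=\infty$. For finite stopping times, let $\mathcal{F}_\ell$ be the set of matrices whose columns form a maximal linearly independent subset of $\lbrace A'w_{\tau_{\ell-1}+1}/\|A'w_{\tau_{\ell-1}+1}\|_2,\ldots,A'w_{\tau_\ell}/\|A'w_{\tau_\ell}\|_2\rbrace$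 and $\gamma_\ell = 1-\min_{F\in\mathcal{F}_\ell}\det(F'F)$. Then, on the events $\bigcap_{\ell=0}^\infty\lbrace\tau_\ell<\infty\rbrace$ and $\lbrace\lim_{\ell\to\infty}\prod_{j=1}^\ell\gamma_j = 0\rbrace$, $\lim_{k\to\infty}Ax_k = b$ if and only if $P_{\mathcal{V}(w)}x_0 = P_{\mathcal{V}(w)}x^*$.
   Context: $P_W$ is orthogonal projection onto $W$; $\mathrm{row}(A)$ is the row space of $A$; $A'$ is the transpose. The iteration presupposes $A'w_k\neq 0$. *)

theory Defs
  imports "HOL-Analysis.Analysis" "HOL-Probability.Probability"
begin

definition orth_proj :: "('a::real_inner) set \<Rightarrow> 'a \<Rightarrow> 'a" where
  "orth_proj W x = (THE y. y \<in> W \<and> (\<forall>v\<in>W. orthogonal (x - y) v))"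

definition row_space :: "real^'d^'n \<Rightarrow> (real^'d) set" where
  "row_space A = span (rows A)"

primrec iterate :: "real^'d^'n \<Rightarrow> real^'n \<Rightarrow> (nat \<Rightarrow> real^'n) \<Rightarrow> real^'d \<Rightarrow> nat \<Rightarrow> real^'d" where
  "iterate A b w x0 0 = x0"
| "iterate A b w x0 (Suc k) =
     (let x = iterate A b w x0 k
      in x + (1 / (norm (transpose A *v w k))^2) *\<^sub>R (transpose A *v ((w k \<bullet> (b - A *v x)) *\<^sub>R w k)))"

definition first_spanning :: "(nat \<Rightarrow> 'a::real_vector) \<Rightarrow> 'a set \<Rightarrow> nat \<Rightarrow> nat \<Rightarrow> enat" where
  "first_spanning u R s t =
     (if \<exists>k\<ge>t. span (u ` {s..k}) = R
      then enat (LEAST k. k \<ge> t \<and> span (u ` {s..k}) = R) else \<infinity>)"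

fun stop_time :: "(nat \<Rightarrow> 'a::real_vector) \<Rightarrow> 'a set \<Rightarrow> nat \<Rightarrow> enat" where
  "stop_time u R 0 = 0"
| "stop_time u R (Suc 0) = first_spanning u R 0 0"
| "stop_time u R (Suc (Suc l)) =
     (case stop_time u R (Suc l) of
        enat t \<Rightarrow> first_spanning u R (Suc t) (Suc t)
      | \<infinity> \<Rightarrow> \<infinity>)"

text \<open>det(F'F) for the matrix F whose columns are the list cs (Leibniz formula for the
  determinant of the Gram matrix (F'F)_{ij} = cs!i \<bullet> cs!j).\<close>
definition gram_det :: "('a::real_inner) list \<Rightarrow> real" where
  "gram_det cs = (\<Sum>p\<in>{p. p permutes {..<length cs}}.
      of_int (sign p) * (\<Prod>i<length cs. (cs ! i) \<bullet> (cs ! (p i))))"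

definition max_indep_cols :: "('a::real_vector) set \<Rightarrow> 'a list set" where
  "max_indep_cols S = {cs. distinct cs \<and> set cs \<subseteq> S \<and> independent (set cs) \<and>
       (\<forall>T. set cs \<subset> T \<and> T \<subseteq> S \<longrightarrow> dependent T)}"

definition block_vectors :: "(nat \<Rightarrow> 'a::real_normed_vector) \<Rightarrow> 'a set \<Rightarrow> nat \<Rightarrow> 'a set" where
  "block_vectors u R l =
     (let lo = (if l = 1 then 0 else the_enat (stop_time u R (l - 1)) + 1);
          hi = the_enat (stop_time u R l)
      in (\<lambda>j. (1 / norm (u j)) *\<^sub>R u j) ` {lo..hi})"

definition gamma :: "(nat \<Rightarrow> 'a::real_inner) \<Rightarrow> 'a set \<Rightarrow> nat \<Rightarrow> real" where
  "gamma u R l = 1 - Min (gram_det ` max_indep_cols (block_vectors u R l))"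

end

theory Submission
  imports Defs "Jordan_Normal_Form.Determinant"
begin

text \<open>
  Writing \<open>u\<^sub>k = A' w\<^sub>k\<close>, the error \<open>x\<^sub>k - x\<^sup>*\<close> evolves by the orthogonal projections onto the
  hyperplanes \<open>u\<^sub>k\<^sup>\<bottom>\<close>. Since every \<open>u\<^sub>k\<close> lies in \<open>\<R>\<close>, the component of the error orthogonal to \<open>\<R>\<close>
  never changes, while by Meany's inequality the composite of the projections of one block,
  whose normalised vectors span \<open>\<R>\<close>, shrinks the squared length of the \<open>\<R>\<close>-component by
  the factor \<open>\<gamma>\<^sub>\<ell>\<close>. Hence \<open>A x\<^sub>k \<rightarrow> b + A q\<close>, where \<open>q\<close> is the component of \<open>x\<^sub>0 - x\<^sup>*\<close>
  orthogonal to \<open>\<R>\<close>, and \<open>A q = 0\<close> holds iff \<open>q\<close> is orthogonal to \<open>row(A) = \<V> \<oplus> \<R>\<close>,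
  i.e. iff \<open>x\<^sub>0 - x\<^sup>*\<close> is orthogonal to \<open>\<V>\<close>.
\<close>

no_notation Matrix.scalar_prod (infix "\<bullet>" 70)
no_notation Matrix.vec_index (infixl "$" 100)
hide_const (open) Matrix.orthogonal Matrix.row Matrix.col Matrix.mat Matrix.vec Matrix.rows Matrix.cols

section \<open>Gram determinants\<close>

definition gram_matrix :: "('a::real_inner) list \<Rightarrow> real Matrix.mat" where
  "gram_matrix cs = Matrix.mat (length cs) (length cs) (\<lambda>(i, j). cs ! i \<bullet> cs ! j)"

lemma gram_matrix_carrier: "gram_matrix cs \<in> carrier_mat (length cs) (length cs)"
  by (simp add: gram_matrix_def)

lemma gram_det_eq_det: "gram_det cs = Determinant.det (gram_matrix cs)"
proof -
  have "Determinant.det (gram_matrix cs) = (\<Sum>p\<in>{p. p permutes {0..<length cs}}.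
      signof p * (\<Prod>i=0..<length cs. gram_matrix cs $$ (i, p i)))"
    by (rule det_def'[OF gram_matrix_carrier])
  also have "\<dots> = gram_det cs"
    unfolding gram_det_def lessThan_atLeast0
  proof (rule sum.cong[OF refl])
    fix p assume "p \<in> {p. p permutes {0..<length cs}}"
    then have p: "p permutes {0..<length cs}" by simp
    have "(\<Prod>i=0..<length cs. gram_matrix cs $$ (i, p i)) = (\<Prod>i=0..<length cs. cs ! i \<bullet> cs ! p i)"
      using permutes_in_image[OF p] by (intro prod.cong) (auto simp: gram_matrix_def)
    then show "signof p * (\<Prod>i=0..<length cs. gram_matrix cs $$ (i, p i)) =
        of_int (sign p) * (\<Prod>i=0..<length cs. cs ! i \<bullet> cs ! p i)"
      by simp
  qed
  finally show ?thesis ..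
qed

lemma gram_det_Nil [simp]: "gram_det [] = 1"
  by (simp add: gram_det_eq_det gram_matrix_def det_def)

lemma gram_det_Cons_add_multiple:
  assumes j: "j < length cs"
  shows "gram_det ((a + c *\<^sub>R cs ! j) # cs) = gram_det (a # cs)"
proof -
  let ?G = "gram_matrix (a # cs)"
  have G: "?G \<in> carrier_mat (Suc (length cs)) (Suc (length cs))"
    using gram_matrix_carrier[of "a # cs"] by simp
  have "gram_matrix ((a + c *\<^sub>R cs ! j) # cs) = addcol c 0 (Suc j) (addrow c 0 (Suc j) ?G)"
    by (rule eq_matI)
      (auto simp: gram_matrix_def nth_Cons' inner_add_left inner_add_right algebra_simps j)
  moreover have "Determinant.det (addcol c 0 (Suc j) (addrow c 0 (Suc j) ?G)) = Determinant.det ?G"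
    using j G by (subst det_addcol[where n="Suc (length cs)"])
      (auto intro!: det_addrow[where n="Suc (length cs)"])
  ultimately show ?thesis by (simp add: gram_det_eq_det)
qed

lemma gram_det_Cons_add_span:
  assumes "p \<in> span (set cs)"
  shows "gram_det ((a + p) # cs) = gram_det (a # cs)"
  using assms
proof (induction p arbitrary: a rule: span_induct_alt)
  case base
  then show ?case by simp
next
  case (step c x y)
  then obtain j where j: "j < length cs" "x = cs ! j" by (auto simp: in_set_conv_nth)
  have "gram_det ((a + (c *\<^sub>R x + y)) # cs) = gram_det (((a + c *\<^sub>R cs ! j) + y) # cs)"
    using j by (simp add: algebra_simps)
  also have "\<dots> = gram_det ((a + c *\<^sub>R cs ! j) # cs)" by (rule step.IH)
  also have "\<dots> = gram_det (a # cs)" by (rule gram_det_Cons_add_multiple[OF j(1)])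
  finally show ?case .
qed

lemma gram_det_Cons_orthogonal:
  assumes "\<forall>c\<in>set cs. r \<bullet> c = 0"
  shows "gram_det (r # cs) = (r \<bullet> r) * gram_det cs"
proof -
  let ?G = "gram_matrix (r # cs)"
  have G: "?G \<in> carrier_mat (Suc (length cs)) (Suc (length cs))"
    using gram_matrix_carrier[of "r # cs"] by simp
  have "Determinant.det ?G = (\<Sum>j<Suc (length cs). ?G $$ (0, j) * cofactor ?G 0 j)"
    by (rule laplace_expansion_row[OF G]) simp
  also have "\<dots> = ?G $$ (0, 0) * cofactor ?G 0 0"
    unfolding sum.lessThan_Suc_shift using assms
    by (auto simp: gram_matrix_def intro!: sum.neutral)
  also have "mat_delete ?G 0 0 = gram_matrix cs"
    by (rule eq_matI) (auto simp: gram_matrix_def mat_delete_def)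
  then have "cofactor ?G 0 0 = gram_det cs"
    by (simp add: cofactor_def gram_det_eq_det)
  finally show ?thesis by (simp add: gram_det_eq_det gram_matrix_def)
qed

section \<open>Maximal linearly independent sublists\<close>

lemma max_indep_colsD:
  assumes "cs \<in> max_indep_cols S"
  shows "distinct cs" "set cs \<subseteq> S" "independent (set cs)"
    and "\<And>T. set cs \<subset> T \<Longrightarrow> T \<subseteq> S \<Longrightarrow> dependent T"
  using assms by (auto simp: max_indep_cols_def)

lemma max_indep_colsI:
  assumes "distinct cs" "independent (set cs)" "set cs \<subseteq> S" "S \<subseteq> span (set cs)"
  shows "cs \<in> max_indep_cols S"
  unfolding max_indep_cols_def
proof (intro CollectI conjI allI impI assms)
  fix T assume T: "set cs \<subset> T \<and> T \<subseteq> S"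
  then obtain t where t: "t \<in> T" "t \<notin> set cs" by blast
  have "t \<in> span (set cs)" using T t assms(4) by blast
  moreover have "span (set cs) \<subseteq> span (T - {t})" using T t by (intro span_mono) blast
  ultimately show "dependent T" using t unfolding dependent_def by blast
qed

lemma max_indep_cols_subset_span:
  assumes cs: "cs \<in> max_indep_cols S"
  shows "S \<subseteq> span (set cs)"
proof
  fix s assume s: "s \<in> S"
  show "s \<in> span (set cs)"
  proof (rule ccontr)
    assume s_notin: "s \<notin> span (set cs)"
    then have "set cs \<subset> insert s (set cs)" using span_base by blast
    then have "dependent (insert s (set cs))"
      using max_indep_colsD(2,4)[OF cs] s by simp
    then show False
      using max_indep_colsD(3)[OF cs] s_notin span_base by (metis independent_insert)
  qed
qed

lemma span_max_indep_cols:
  assumes "cs \<in> max_indep_cols S"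
  shows "span (set cs) = span S"
  unfolding span_eq
  using max_indep_colsD(2)[OF assms] max_indep_cols_subset_span[OF assms] span_superset by blast

lemma max_indep_cols_insert_in_span:
  assumes cs: "cs \<in> max_indep_cols S" and a: "a \<in> span S"
  shows "cs \<in> max_indep_cols (insert a S)"
proof (rule max_indep_colsI)
  show "insert a S \<subseteq> span (set cs)"
    using max_indep_cols_subset_span[OF cs] a span_max_indep_cols[OF cs] by blast
qed (use max_indep_colsD(1-3)[OF cs] in blast)+

lemma max_indep_cols_insert_notin_span:
  assumes cs: "cs \<in> max_indep_cols S" and a: "a \<notin> span S"
  shows "a # cs \<in> max_indep_cols (insert a S)"
proof (rule max_indep_colsI)
  have a': "a \<notin> span (set cs)"
    using a span_max_indep_cols[OF cs] by blast
  then show "distinct (a # cs)" "independent (set (a # cs))"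
    using max_indep_colsD(1,3)[OF cs] span_base by (auto simp: independent_insert)
  show "set (a # cs) \<subseteq> insert a S"
    using max_indep_colsD(2)[OF cs] by auto
  have "S \<subseteq> span (set (a # cs))"
    using max_indep_cols_subset_span[OF cs] span_mono[of "set cs" "set (a # cs)"] by auto
  then show "insert a S \<subseteq> span (set (a # cs))"
    by (simp add: span_base)
qed

lemma finite_max_indep_cols:
  assumes "finite S"
  shows "finite (max_indep_cols S)"
proof (rule finite_subset)
  show "max_indep_cols S \<subseteq> {cs. set cs \<subseteq> S \<and> length cs \<le> card S}"
  proof
    fix cs assume cs: "cs \<in> max_indep_cols S"
    have "length cs = card (set cs)"
      using distinct_card[OF max_indep_colsD(1)[OF cs]] by simp
    also have "\<dots> \<le> card S"
      using card_mono[OF assms max_indep_colsD(2)[OF cs]] .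
    finally show "cs \<in> {cs. set cs \<subseteq> S \<and> length cs \<le> card S}"
      using max_indep_colsD(2)[OF cs] by simp
  qed
  show "finite {cs. set cs \<subseteq> S \<and> length cs \<le> card S}"
    using finite_lists_length_le[OF assms] .
qed

section \<open>Projections onto hyperplanes and Meany's inequality\<close>

text \<open>Only for a unit vector \<open>a\<close> is \<open>proj_perp a\<close> the orthogonal projection onto \<open>a\<^sup>\<bottom>\<close>.\<close>
definition proj_perp :: "'a::real_inner \<Rightarrow> 'a \<Rightarrow> 'a" where
  "proj_perp a x = x - (a \<bullet> x) *\<^sub>R a"

lemma inner_proj_perp_self:
  assumes "norm a = 1"
  shows "proj_perp a x \<bullet> proj_perp a x = x \<bullet> x - (a \<bullet> x)\<^sup>2"
  using assms by (simp add: proj_perp_def norm_eq_1 inner_diff_left inner_diff_right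
      inner_commute power2_eq_square)

lemma inner_proj_perp_le:
  assumes "norm a = 1"
  shows "proj_perp a x \<bullet> proj_perp a x \<le> x \<bullet> x"
  using inner_proj_perp_self[OF assms] by simp

lemma proj_perp_orthogonal:
  assumes "norm a = 1"
  shows "a \<bullet> proj_perp a x = 0"
  using assms by (simp add: proj_perp_def norm_eq_1 inner_diff_right)

lemma proj_perp_in_subspace:
  assumes "subspace W" "a \<in> W" "x \<in> W"
  shows "proj_perp a x \<in> W"
  using assms by (simp add: proj_perp_def subspace_diff subspace_scale)

lemma proj_perp_add_orthogonal:
  assumes "a \<bullet> z = 0"
  shows "proj_perp a (y + z) = proj_perp a y + z"
  using assms by (simp add: proj_perp_def inner_add_right algebra_simps)

lemma fold_proj_perp_in_subspace:
  assumes "subspace W" "set as \<subseteq> W" "x \<in> W"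
  shows "fold proj_perp as x \<in> W"
  using assms(2,3) by (induction as arbitrary: x) (auto simp: proj_perp_in_subspace[OF assms(1)])

lemma fold_proj_perp_add_orthogonal:
  assumes "\<forall>a\<in>set as. a \<bullet> z = 0"
  shows "fold proj_perp as (y + z) = fold proj_perp as y + z"
  using assms by (induction as arbitrary: y) (auto simp: proj_perp_add_orthogonal)

definition contracts :: "'a::real_inner list \<Rightarrow> real \<Rightarrow> bool" where
  "contracts as \<kappa> \<longleftrightarrow>
     (\<forall>x\<in>span (set as). fold proj_perp as x \<bullet> fold proj_perp as x \<le> \<kappa> * (x \<bullet> x))"

lemma contracts_Cons_in_span:
  assumes a: "norm a = 1" "a \<in> span (set as)" and "0 \<le> \<kappa>" "contracts as \<kappa>"
  shows "contracts (a # as) \<kappa>"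
  unfolding contracts_def
proof
  fix x assume "x \<in> span (set (a # as))"
  then have "proj_perp a x \<in> span (set as)"
    using a(2) by (simp add: span_redundant proj_perp_in_subspace)
  then have "fold proj_perp (a # as) x \<bullet> fold proj_perp (a # as) x
      \<le> \<kappa> * (proj_perp a x \<bullet> proj_perp a x)"
    using assms(4) by (simp add: contracts_def)
  also have "\<dots> \<le> \<kappa> * (x \<bullet> x)"
    using assms(3) inner_proj_perp_le[OF a(1)] by (intro mult_left_mono)
  finally show "fold proj_perp (a # as) x \<bullet> fold proj_perp (a # as) x \<le> \<kappa> * (x \<bullet> x)" .
qed

lemma orthogonal_in_span_insert:
  assumes "z \<in> span (insert a S)" "\<forall>w\<in>span S. z \<bullet> w = 0"
    and "a = p + r" "p \<in> span S" "\<forall>w\<in>span S. r \<bullet> w = 0"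
  obtains c where "z = c *\<^sub>R r"
proof -
  obtain c where c: "z - c *\<^sub>R a \<in> span S"
    using assms(1) span_breakdown_eq by blast
  have "z - c *\<^sub>R r = (z - c *\<^sub>R a) + c *\<^sub>R p"
    using assms(3) by (simp add: algebra_simps)
  then have "z - c *\<^sub>R r \<in> span S"
    using c assms(4) by (metis span_add span_mul)
  then have "(z - c *\<^sub>R r) \<bullet> (z - c *\<^sub>R r) = 0"
    using assms(2,5) by (simp add: inner_diff_left)
  then have "z = c *\<^sub>R r" by simp
  then show ?thesis by (rule that)
qed

text \<open>
  With \<open>r\<close> the component of the unit vector \<open>a\<close> orthogonal to a subspace containing \<open>p\<close>
  and \<open>y\<close>, \<open>r \<bullet> r\<close> is the squared sine of the angle between \<open>a\<close> and that subspace: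
  projecting a vector orthogonal to \<open>a\<close> onto the subspace keeps at least this fraction of its
  squared length.
\<close>
lemma sine_projection_bound:
  fixes a p r y :: "'a::real_inner"
  assumes "a \<bullet> a = 1" "a = p + r" "p \<bullet> r = 0" "r \<bullet> y = 0" "a \<bullet> (y + c *\<^sub>R r) = 0"
  shows "(r \<bullet> r) * ((y + c *\<^sub>R r) \<bullet> (y + c *\<^sub>R r)) \<le> y \<bullet> y"
proof -
  have unit: "p \<bullet> p + r \<bullet> r = 1"
    using assms(1-3) by (simp add: inner_add_left inner_add_right inner_commute)
  have "c * (r \<bullet> r) = - (p \<bullet> y)"
    using assms(2-5) by (simp add: inner_add_left inner_add_right inner_commute)
  then have c: "(c * (r \<bullet> r))\<^sup>2 = (p \<bullet> y)\<^sup>2"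
    by simp
  have "(r \<bullet> r) * ((y + c *\<^sub>R r) \<bullet> (y + c *\<^sub>R r)) = (r \<bullet> r) * (y \<bullet> y) + (c * (r \<bullet> r))\<^sup>2"
    using assms(4) by (simp add: inner_add_left inner_add_right inner_commute algebra_simps
        power2_eq_square)
  also have "\<dots> \<le> (r \<bullet> r) * (y \<bullet> y) + (p \<bullet> p) * (y \<bullet> y)"
    using Cauchy_Schwarz_ineq[of p y] by (simp add: c)
  also have "\<dots> = y \<bullet> y"
    using unit by (simp add: distrib_right[symmetric] add.commute)
  finally show ?thesis .
qed

lemma proj_perp_decomp_sine_bound:
  fixes a :: "'a::euclidean_space"
  assumes a: "norm a = 1" "a = p + r" "p \<in> span S" "\<forall>w\<in>span S. r \<bullet> w = 0"
    and x: "x \<in> span (insert a S)"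
  obtains y c where "y \<in> span S" "proj_perp a x = y + c *\<^sub>R r"
    "(r \<bullet> r) * (proj_perp a x \<bullet> proj_perp a x) \<le> y \<bullet> y"
proof -
  obtain y z where y: "y \<in> span S" and z: "\<forall>w\<in>span S. z \<bullet> w = 0" and yz: "proj_perp a x = y + z"
    using orthogonal_subspace_decomp_exists[of S "proj_perp a x"]
    unfolding Linear_Algebra.orthogonal_def by metis
  have "proj_perp a x \<in> span (insert a S)"
    using x by (simp add: proj_perp_in_subspace span_base)
  moreover have "y \<in> span (insert a S)"
    using y span_mono[of S "insert a S"] by blast
  ultimately have "proj_perp a x - y \<in> span (insert a S)"
    by (rule span_diff)
  then obtain c where "z = c *\<^sub>R r"
    using orthogonal_in_span_insert[OF _ z a(2-4)] yz by auto
  then have yc: "proj_perp a x = y + c *\<^sub>R r"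
    using yz by simp
  have "(r \<bullet> r) * (proj_perp a x \<bullet> proj_perp a x) \<le> y \<bullet> y"
    unfolding yc
  proof (rule sine_projection_bound)
    show "a \<bullet> a = 1" using a(1) by (simp add: norm_eq_1)
    show "p \<bullet> r = 0" using a(3,4) by (simp add: inner_commute)
    show "r \<bullet> y = 0" using a(4) y by simp
    show "a \<bullet> (y + c *\<^sub>R r) = 0" using proj_perp_orthogonal[OF a(1), of x] yc by simp
  qed (fact a(2))
  then show ?thesis
    by (rule that[OF y yc])
qed

lemma contracts_Cons_notin_span:
  fixes a :: "'a::euclidean_space"
  assumes a: "norm a = 1" "a = p + r" "p \<in> span (set as)" "\<forall>w\<in>span (set as). r \<bullet> w = 0"
    and g: "0 \<le> g" "(r \<bullet> r) * g \<le> 1" and "contracts as (1 - g)"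
  shows "contracts (a # as) (1 - (r \<bullet> r) * g)"
  unfolding contracts_def
proof
  fix x assume "x \<in> span (set (a # as))"
  then obtain y c where y: "y \<in> span (set as)" and yc: "proj_perp a x = y + c *\<^sub>R r"
    and sine: "(r \<bullet> r) * (proj_perp a x \<bullet> proj_perp a x) \<le> y \<bullet> y"
    using proj_perp_decomp_sine_bound[OF a] by auto
  let ?y' = "proj_perp a x" and ?Qy = "fold proj_perp as y"
  have "?Qy \<in> span (set as)"
    using y by (simp add: fold_proj_perp_in_subspace span_base subset_iff)
  then have r_Qy: "r \<bullet> ?Qy = 0"
    using a(4) by simp
  have r_y: "r \<bullet> y = 0"
    using a(4) y by simp
  have "\<forall>b\<in>set as. b \<bullet> (c *\<^sub>R r) = 0"
    using a(4) by (simp add: span_base inner_commute)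
  then have "fold proj_perp (a # as) x = ?Qy + c *\<^sub>R r"
    by (simp add: yc fold_proj_perp_add_orthogonal)
  then have "fold proj_perp (a # as) x \<bullet> fold proj_perp (a # as) x = ?Qy \<bullet> ?Qy + c\<^sup>2 * (r \<bullet> r)"
    using r_Qy by (simp add: inner_add_left inner_add_right inner_commute power2_eq_square)
  also have "\<dots> \<le> (1 - g) * (y \<bullet> y) + c\<^sup>2 * (r \<bullet> r)"
    using assms(7) y by (simp add: contracts_def)
  also have "\<dots> = ?y' \<bullet> ?y' - g * (y \<bullet> y)"
    using r_y by (simp add: yc inner_add_left inner_add_right inner_commute power2_eq_square
        algebra_simps)
  also have "\<dots> \<le> (1 - (r \<bullet> r) * g) * (?y' \<bullet> ?y')"
    using mult_left_mono[OF sine g(1)] by (simp add: algebra_simps)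
  also have "\<dots> \<le> (1 - (r \<bullet> r) * g) * (x \<bullet> x)"
    using g(2) inner_proj_perp_le[OF a(1)] by (intro mult_left_mono) auto
  finally show "fold proj_perp (a # as) x \<bullet> fold proj_perp (a # as) x
      \<le> (1 - (r \<bullet> r) * g) * (x \<bullet> x)" .
qed

lemma gram_det_Cons_max_indep_cols:
  assumes cs: "cs \<in> max_indep_cols S"
    and a: "a = p + r" "p \<in> span S" "\<forall>w\<in>span S. r \<bullet> w = 0"
  shows "gram_det (a # cs) = (r \<bullet> r) * gram_det cs"
proof -
  have "gram_det (a # cs) = gram_det ((r + p) # cs)"
    using a(1) by (simp add: add.commute)
  also have "\<dots> = gram_det (r # cs)"
    using a(2) span_max_indep_cols[OF cs] by (intro gram_det_Cons_add_span) simp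
  also have "\<dots> = (r \<bullet> r) * gram_det cs"
  proof (rule gram_det_Cons_orthogonal)
    show "\<forall>c\<in>set cs. r \<bullet> c = 0"
      using a(3) span_base[of _ "set cs"] unfolding span_max_indep_cols[OF cs] by blast
  qed
  finally show ?thesis .
qed

lemma meany_inequality:
  fixes as :: "'a::euclidean_space list"
  assumes "\<forall>a\<in>set as. norm a = 1"
  shows "\<exists>cs\<in>max_indep_cols (set as).
    0 \<le> gram_det cs \<and> gram_det cs \<le> 1 \<and> contracts as (1 - gram_det cs)"
  using assms
proof (induction as)
  case Nil
  have "[] \<in> max_indep_cols (set [])"
    by (rule max_indep_colsI) (auto simp: independent_empty)
  then show ?case by (intro bexI[of _ "[]"]) (auto simp: contracts_def)
next
  case (Cons a as)
  then obtain cs where cs: "cs \<in> max_indep_cols (set as)" "0 \<le> gram_det cs" "gram_det cs \<le> 1"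
    and contr: "contracts as (1 - gram_det cs)"
    by auto
  have a: "norm a = 1" using Cons.prems by simp
  show ?case
  proof (cases "a \<in> span (set as)")
    case True
    then show ?thesis
      using max_indep_cols_insert_in_span[OF cs(1) True] cs(2,3)
        contracts_Cons_in_span[OF a True _ contr]
      by auto
  next
    case False
    obtain p r where p: "p \<in> span (set as)" and r: "\<forall>w\<in>span (set as). r \<bullet> w = 0"
      and apr: "a = p + r"
      using orthogonal_subspace_decomp_exists[of "set as" a]
      unfolding Linear_Algebra.orthogonal_def by metis
    have gram: "gram_det (a # cs) = (r \<bullet> r) * gram_det cs"
      by (rule gram_det_Cons_max_indep_cols[OF cs(1) apr p r])
    have "p \<bullet> p + r \<bullet> r = 1"
      using a apr r p by (simp add: norm_eq_1 inner_add_left inner_add_right inner_commute)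
    then have "r \<bullet> r \<le> 1"
      using inner_ge_zero[of p] by linarith
    then have g1: "(r \<bullet> r) * gram_det cs \<le> 1"
      using cs(2,3) by (simp add: mult_le_one)
    then show ?thesis
      using max_indep_cols_insert_notin_span[OF cs(1) False] cs(2) gram
        contracts_Cons_notin_span[OF a apr p r cs(2) g1 contr]
      by (intro bexI[of _ "a # cs"]) simp_all
  qed
qed

section \<open>Blocks between stopping times\<close>

lemma first_spanning_eq_enatD:
  assumes "first_spanning u R s t = enat k"
  shows "t \<le> k" "span (u ` {s..k}) = R"
proof -
  have ex: "\<exists>k\<ge>t. span (u ` {s..k}) = R"
    using assms unfolding first_spanning_def by (auto split: if_splits)
  then have "k = (LEAST k. t \<le> k \<and> span (u ` {s..k}) = R)"
    using assms unfolding first_spanning_def by auto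
  then show "t \<le> k" "span (u ` {s..k}) = R"
    using LeastI_ex[OF ex] by simp_all
qed

text \<open>Block \<open>l + 1\<close>, in the numbering of \<^const>\<open>block_vectors\<close>, starts at index \<open>block_start u R l\<close>.\<close>
definition block_start :: "(nat \<Rightarrow> 'a::real_vector) \<Rightarrow> 'a set \<Rightarrow> nat \<Rightarrow> nat" where
  "block_start u R l = (if l = 0 then 0 else Suc (the_enat (stop_time u R l)))"

lemma block_start_Suc: "block_start u R (Suc l) = Suc (the_enat (stop_time u R (Suc l)))"
  by (simp add: block_start_def)

lemma finite_stop_time_block:
  assumes "\<forall>l. stop_time u R l \<noteq> \<infinity>"
  shows "block_start u R l \<le> the_enat (stop_time u R (Suc l))"
    and "span (u ` {block_start u R l .. the_enat (stop_time u R (Suc l))}) = R"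
proof -
  obtain k where k: "stop_time u R (Suc l) = enat k"
    using assms not_infinity_eq by metis
  have "first_spanning u R (block_start u R l) (block_start u R l) = enat k"
  proof (cases l)
    case 0
    then show ?thesis using k by (simp add: block_start_def)
  next
    case (Suc m)
    obtain t where "stop_time u R (Suc m) = enat t"
      using assms not_infinity_eq by metis
    then show ?thesis using k Suc by (simp add: block_start_def)
  qed
  then show "block_start u R l \<le> the_enat (stop_time u R (Suc l))"
    and "span (u ` {block_start u R l .. the_enat (stop_time u R (Suc l))}) = R"
    using first_spanning_eq_enatD k by simp_all
qed

lemma block_vectors_Suc:
  "block_vectors u R (Suc l) = sgn ` u ` {block_start u R l .. the_enat (stop_time u R (Suc l))}"
  by (auto simp: block_vectors_def block_start_def Let_def sgn_div_norm divide_inverse)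

lemma span_image_sgn:
  fixes S :: "'a::real_normed_vector set"
  shows "span (sgn ` S) = span S"
proof -
  have "sgn ` S \<subseteq> span S"
    by (auto simp: sgn_div_norm intro: span_mul span_base)
  moreover have "S \<subseteq> span (sgn ` S)"
  proof
    fix x assume "x \<in> S"
    then have "norm x *\<^sub>R sgn x \<in> span (sgn ` S)"
      by (intro span_mul span_base) simp
    then show "x \<in> span (sgn ` S)"
      by (cases "x = 0") (simp_all add: sgn_div_norm span_zero)
  qed
  ultimately show ?thesis
    by (simp add: span_eq)
qed

section \<open>Convergence of the projected iterates\<close>

lemma decseq_tendsto_zeroI:
  fixes f g :: "nat \<Rightarrow> real"
  assumes "decseq f" "\<And>l. f (s l) \<le> g l" "g \<longlonglongrightarrow> 0" "\<And>k. 0 \<le> f k"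
  shows "f \<longlonglongrightarrow> 0"
proof (rule LIMSEQ_I)
  fix \<epsilon> :: real assume "0 < \<epsilon>"
  then obtain l where "norm (g l - 0) < \<epsilon>"
    using LIMSEQ_D[OF assms(3)] by blast
  then have "norm (f k - 0) < \<epsilon>" if "s l \<le> k" for k
  proof -
    have "f k \<le> f (s l)"
      using assms(1) that by (simp add: decseq_def)
    then show ?thesis
      using assms(2)[of l] assms(4)[of k] \<open>norm (g l - 0) < \<epsilon>\<close> by simp
  qed
  then show "\<exists>no. \<forall>k\<ge>no. norm (f k - 0) < \<epsilon>"
    by blast
qed

lemma iterate_Suc_minus_solution:
  assumes "A *v xs = b"
  shows "iterate A b w x0 (Suc k) - xs
    = proj_perp (sgn (transpose A *v w k)) (iterate A b w x0 k - xs)"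
proof -
  define x u where "x = iterate A b w x0 k" and "u = transpose A *v w k"
  have "w k \<bullet> (b - A *v x) = u \<bullet> (xs - x)"
    using assms by (simp add: u_def matrix_vector_mult_diff_distrib dot_lmul_matrix)
  then have "iterate A b w x0 (Suc k) = x + ((u \<bullet> (xs - x)) / (norm u)\<^sup>2) *\<^sub>R u"
    by (simp add: x_def u_def Let_def matrix_vector_mult_scaleR)
  then show ?thesis
    unfolding x_def[symmetric] u_def[symmetric]
    by (simp add: proj_perp_def sgn_div_norm inner_diff_right power2_eq_square divide_inverse
        algebra_simps)
qed

lemma fold_proj_perp_upt:
  assumes "\<And>k. r (Suc k) = proj_perp (v k) (r k)"
  shows "r (m + n) = fold proj_perp (map v [m..<m + n]) (r m)"
  by (induction n) (simp_all add: assms)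

lemma block_contraction:
  fixes u r :: "nat \<Rightarrow> 'a::euclidean_space"
  assumes R: "subspace R" and u: "\<forall>k. u k \<noteq> 0" and fin: "\<forall>l. stop_time u R l \<noteq> \<infinity>"
    and r: "\<And>k. r (Suc k) = proj_perp (sgn (u k)) (r k)" "\<And>k. r k \<in> R"
  shows "r (block_start u R (Suc l)) \<bullet> r (block_start u R (Suc l))
      \<le> gamma u R (Suc l) * (r (block_start u R l) \<bullet> r (block_start u R l))"
    and "0 \<le> gamma u R (Suc l)"
proof -
  define lo hi where "lo = block_start u R l" and "hi = the_enat (stop_time u R (Suc l))"
  define L where "L = map (\<lambda>k. sgn (u k)) [lo..<Suc hi]"
  have lo_hi: "lo \<le> hi"
    using finite_stop_time_block(1)[OF fin] by (simp add: lo_def hi_def)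
  have "set L = sgn ` u ` {lo..hi}"
    by (simp add: L_def image_image atLeastLessThanSuc_atLeastAtMost del: upt_Suc)
  then have set_L: "set L = block_vectors u R (Suc l)" and span_L: "span (set L) = R"
    using finite_stop_time_block(2)[OF fin, of l] span_image_sgn[of "u ` {lo..hi}"]
    by (simp_all add: block_vectors_Suc lo_def hi_def)
  have "\<forall>a\<in>set L. norm a = 1"
    using u by (auto simp: L_def norm_sgn)
  then obtain cs where cs: "cs \<in> max_indep_cols (set L)" "gram_det cs \<le> 1"
    and contr: "contracts L (1 - gram_det cs)"
    using meany_inequality by blast
  have "Min (gram_det ` max_indep_cols (set L)) \<le> gram_det cs"
    using cs(1) finite_max_indep_cols[of "set L"] by (intro Min_le) auto
  then have gamma: "1 - gram_det cs \<le> gamma u R (Suc l)"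
    by (simp add: gamma_def set_L)
  then show "0 \<le> gamma u R (Suc l)"
    using cs(2) by linarith
  have "r (Suc hi) = fold proj_perp L (r lo)"
    using fold_proj_perp_upt[of r "\<lambda>k. sgn (u k)" lo "Suc hi - lo", OF r(1)] lo_hi
    by (simp add: L_def)
  then have "r (Suc hi) \<bullet> r (Suc hi) \<le> (1 - gram_det cs) * (r lo \<bullet> r lo)"
    using contr r(2) span_L by (simp add: contracts_def)
  also have "\<dots> \<le> gamma u R (Suc l) * (r lo \<bullet> r lo)"
    using gamma by (intro mult_right_mono) auto
  finally show "r (block_start u R (Suc l)) \<bullet> r (block_start u R (Suc l))
      \<le> gamma u R (Suc l) * (r (block_start u R l) \<bullet> r (block_start u R l))"
    by (simp add: block_start_Suc lo_def hi_def)
qed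

lemma proj_perp_iteration_tendsto_zero:
  fixes u r :: "nat \<Rightarrow> 'a::euclidean_space"
  assumes R: "subspace R" and u: "\<forall>k. u k \<in> R" "\<forall>k. u k \<noteq> 0"
    and fin: "\<forall>l. stop_time u R l \<noteq> \<infinity>"
    and prod: "(\<lambda>l. \<Prod>j=1..l. gamma u R j) \<longlonglongrightarrow> 0"
    and r: "\<And>k. r (Suc k) = proj_perp (sgn (u k)) (r k)" "r 0 \<in> R"
  shows "r \<longlonglongrightarrow> 0"
proof -
  have r_in: "r k \<in> R" for k
    using u(1) r by (induction k) (simp_all add: proj_perp_in_subspace[OF R] sgn_div_norm subspace_scale[OF R])
  define f where "f k = r k \<bullet> r k" for k
  have "decseq f"
    using u(2) by (intro decseq_SucI) (simp add: f_def r(1) inner_proj_perp_le norm_sgn)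
  have f_block: "f (block_start u R l) \<le> (\<Prod>j=1..l. gamma u R j) * f 0" for l
  proof (induction l)
    case 0
    then show ?case by (simp add: block_start_def)
  next
    case (Suc l)
    have "f (block_start u R (Suc l)) \<le> gamma u R (Suc l) * f (block_start u R l)"
      using block_contraction(1)[OF R u(2) fin r(1) r_in] by (simp add: f_def)
    also have "\<dots> \<le> gamma u R (Suc l) * ((\<Prod>j=1..l. gamma u R j) * f 0)"
      using Suc block_contraction(2)[OF R u(2) fin r(1) r_in] by (intro mult_left_mono)
    finally show ?case
      by (simp add: prod.nat_ivl_Suc' mult_ac)
  qed
  have "f \<longlonglongrightarrow> 0"
    using \<open>decseq f\<close> f_block tendsto_mult_left_zero[OF prod]
    by (rule decseq_tendsto_zeroI) (simp add: f_def)
  then have "(\<lambda>k. sqrt (f k)) \<longlonglongrightarrow> 0"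
    using tendsto_real_sqrt by fastforce
  then show ?thesis
    by (simp add: f_def tendsto_norm_zero_iff flip: norm_eq_sqrt_inner)
qed

section \<open>Orthogonal projections and the row space\<close>

lemma orth_proj_eqI:
  fixes V :: "'a::real_inner set"
  assumes "subspace V" "y \<in> V" "\<forall>v\<in>V. orthogonal (x - y) v"
  shows "orth_proj V x = y"
  unfolding orth_proj_def
proof (rule the_equality)
  show "y \<in> V \<and> (\<forall>v\<in>V. orthogonal (x - y) v)" using assms by auto
  fix y' assume y': "y' \<in> V \<and> (\<forall>v\<in>V. orthogonal (x - y') v)"
  have "y - y' \<in> V" using assms y' by (simp add: subspace_diff)
  moreover have "y - y' = (x - y') - (x - y)" by simp
  ultimately have "(y - y') \<bullet> (y - y') = 0"
    using y' assms by (metis Linear_Algebra.orthogonal_def inner_diff_left diff_self)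
  then show "y' = y" by simp
qed

lemma orth_proj:
  fixes V :: "'a::euclidean_space set"
  assumes "subspace V"
  shows "orth_proj V x \<in> V" and "\<forall>v\<in>V. (x - orth_proj V x) \<bullet> v = 0"
proof -
  obtain y z where "y \<in> span V" "\<And>w. w \<in> span V \<Longrightarrow> orthogonal z w" "x = y + z"
    using orthogonal_subspace_decomp_exists[of V x] by metis
  then have y: "y \<in> V" "\<forall>v\<in>V. orthogonal (x - y) v"
    using assms by (simp_all add: span_eq_iff[THEN iffD2])
  then show "orth_proj V x \<in> V" "\<forall>v\<in>V. (x - orth_proj V x) \<bullet> v = 0"
    using orth_proj_eqI[OF assms y] by (simp_all add: Linear_Algebra.orthogonal_def)
qed

lemma orth_proj_eq_iff:
  fixes V :: "'a::euclidean_space set"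
  assumes V: "subspace V"
  shows "orth_proj V x = orth_proj V y \<longleftrightarrow> (\<forall>v\<in>V. (x - y) \<bullet> v = 0)"
proof
  assume "orth_proj V x = orth_proj V y"
  then have "x - y = (x - orth_proj V x) - (y - orth_proj V y)"
    by simp
  then show "\<forall>v\<in>V. (x - y) \<bullet> v = 0"
    using orth_proj(2)[OF V, of x] orth_proj(2)[OF V, of y] by (simp add: inner_diff_left)
next
  assume xy: "\<forall>v\<in>V. (x - y) \<bullet> v = 0"
  have "orthogonal (x - orth_proj V y) v" if "v \<in> V" for v
  proof -
    have "(x - orth_proj V y) \<bullet> v = (x - y) \<bullet> v + (y - orth_proj V y) \<bullet> v"
      by (simp add: inner_diff_left)
    then show ?thesis
      using xy orth_proj(2)[OF V, of y] that by (simp add: Linear_Algebra.orthogonal_def)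
  qed
  then show "orth_proj V x = orth_proj V y"
    using orth_proj_eqI[OF V orth_proj(1)[OF V]] by blast
qed

lemma matrix_vector_mult_eq_0_iff_orthogonal_row_space:
  fixes A :: "real^'d^'n"
  shows "A *v q = 0 \<longleftrightarrow> (\<forall>z\<in>row_space A. q \<bullet> z = 0)"
proof -
  have "rows A = range (\<lambda>i. A $ i)"
    by (auto simp: Finite_Cartesian_Product.rows_def Finite_Cartesian_Product.row_def)
  moreover have "A *v q = 0 \<longleftrightarrow> (\<forall>i. A $ i \<bullet> q = 0)"
    by (simp add: Finite_Cartesian_Product.vec_eq_iff matrix_vector_mul_component)
  ultimately have "A *v q = 0 \<longleftrightarrow> (\<forall>z\<in>rows A. q \<bullet> z = 0)"
    by (simp add: inner_commute)
  also have "\<dots> \<longleftrightarrow> (\<forall>z\<in>span (rows A). q \<bullet> z = 0)"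
    using orthogonal_to_span[of _ "rows A" q] span_base
    unfolding Linear_Algebra.orthogonal_def by blast
  finally show ?thesis
    by (simp add: row_space_def)
qed

lemma matrix_vector_mult_eq_0_iff_orthogonal_summand:
  fixes A :: "real^'d^'n"
  assumes row: "{v + r | v r. v \<in> V \<and> r \<in> R} = row_space A" and R: "subspace R"
    and q: "\<forall>r\<in>R. q \<bullet> r = 0"
  shows "A *v q = 0 \<longleftrightarrow> (\<forall>v\<in>V. q \<bullet> v = 0)"
proof -
  have "v \<in> row_space A" if "v \<in> V" for v
    using that subspace_0[OF R] row[symmetric] by force
  moreover have "q \<bullet> (v + r) = 0" if "\<forall>v\<in>V. q \<bullet> v = 0" "v \<in> V" "r \<in> R" for v r
    using that q by (simp add: inner_add_right)
  ultimately show ?thesis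
    unfolding matrix_vector_mult_eq_0_iff_orthogonal_row_space row[symmetric] by blast
qed

section \<open>Convergence of the iteration\<close>

theorem iterate_tendsto_iff_orth_proj_eq:
  fixes A :: "real^'d^'n" and w :: "nat \<Rightarrow> real^'n"
  defines "u \<equiv> \<lambda>k. transpose A *v w k"
  assumes sol: "A *v xs = b"
    and R: "subspace R" and V: "subspace V" and VR: "\<forall>v\<in>V. \<forall>r\<in>R. orthogonal v r"
    and row: "{v + r | v r. v \<in> V \<and> r \<in> R} = row_space A"
    and u: "\<forall>k. u k \<in> R" "\<forall>k. u k \<noteq> 0"
    and fin: "\<forall>l. stop_time u R l \<noteq> \<infinity>"
    and prod: "(\<lambda>l. \<Prod>j=1..l. gamma u R j) \<longlonglongrightarrow> 0"
  shows "((\<lambda>k. A *v iterate A b w x0 k) \<longlonglongrightarrow> b) \<longleftrightarrow> orth_proj V x0 = orth_proj V xs"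
proof -
  define q where "q = (x0 - xs) - orth_proj R (x0 - xs)"
  have q: "\<forall>r\<in>R. q \<bullet> r = 0"
    using orth_proj(2)[OF R] by (simp add: q_def)
  define r where "r k = iterate A b w x0 k - xs - q" for k
  have "r \<longlonglongrightarrow> 0"
  proof (rule proj_perp_iteration_tendsto_zero[OF R u fin prod])
    fix k
    have "sgn (u k) \<in> R"
      using u(1) by (simp add: sgn_div_norm subspace_scale[OF R])
    then have "proj_perp (sgn (u k)) (r k + q) = proj_perp (sgn (u k)) (r k) + q"
      using q by (intro proj_perp_add_orthogonal) (metis inner_commute)
    moreover have "iterate A b w x0 (Suc k) - xs = proj_perp (sgn (u k)) (r k + q)"
      using iterate_Suc_minus_solution[OF sol] by (simp add: r_def u_def)
    ultimately show "r (Suc k) = proj_perp (sgn (u k)) (r k)"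
      by (simp add: r_def)
  next
    show "r 0 \<in> R"
      using orth_proj(1)[OF R] by (simp add: r_def q_def)
  qed
  then have "(\<lambda>k. A *v r k) \<longlonglongrightarrow> 0"
    by (rule bounded_linear.tendsto_zero[OF matrix_vector_mul_bounded_linear])
  moreover have "A *v iterate A b w x0 k = (b + A *v q) + A *v r k" for k
    using sol by (simp add: r_def matrix_vector_right_distrib algebra_simps)
  ultimately have lim: "(\<lambda>k. A *v iterate A b w x0 k) \<longlonglongrightarrow> b + A *v q"
    using tendsto_add[OF tendsto_const] by fastforce
  have "((\<lambda>k. A *v iterate A b w x0 k) \<longlonglongrightarrow> b) \<longleftrightarrow> A *v q = 0"
    using LIMSEQ_unique[OF lim] lim by fastforce
  also have "\<dots> \<longleftrightarrow> (\<forall>v\<in>V. q \<bullet> v = 0)"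
    by (rule matrix_vector_mult_eq_0_iff_orthogonal_summand[OF row R q])
  also have "\<dots> \<longleftrightarrow> (\<forall>v\<in>V. (x0 - xs) \<bullet> v = 0)"
  proof -
    have "orth_proj R (x0 - xs) \<bullet> v = 0" if "v \<in> V" for v
      using VR that orth_proj(1)[OF R] by (metis Linear_Algebra.orthogonal_def inner_commute)
    then show ?thesis
      by (simp add: q_def inner_diff_left)
  qed
  also have "\<dots> \<longleftrightarrow> orth_proj V x0 = orth_proj V xs"
    by (rule orth_proj_eq_iff[OF V, symmetric])
  finally show ?thesis .
qed

lemma (in prob_space) AE_all_prob_1:
  assumes "\<And>l::nat. prob {\<omega> \<in> space M. P l \<omega>} = 1"
  shows "AE \<omega> in M. \<forall>l. P l \<omega>"
  unfolding AE_all_countable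
proof
  fix l
  show "AE \<omega> in M. P l \<omega>"
    using AE_prob_1[OF assms[of l]] by eventually_elim simp
qed

theorem mainTheorem11:
  fixes M :: "'a measure"
    and A :: "real^'d^'n" and b :: "real^'n" and xs :: "real^'d" and x0 :: "real^'d"
    and w :: "'a \<Rightarrow> real^'n" and ws :: "nat \<Rightarrow> 'a \<Rightarrow> real^'n"
    and N R V :: "(real^'d) set"
  assumes "prob_space M"
    and sol: "A *v xs = b"
    and w_meas: "w \<in> borel_measurable M"
    and ws_meas: "\<And>l. ws l \<in> borel_measurable M"
    and N_def: "N = span {z. measure M {\<omega> \<in> space M. z \<bullet> (transpose A *v w \<omega>) = 0} = 1}"
    and R_def: "R = orthogonal_comp N"
    and V_sub: "subspace V"
    and V_orth: "\<forall>v\<in>V. \<forall>r\<in>R. orthogonal v r"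
    and V_sum: "V \<inter> R = {0}" "{v + r | v r. v \<in> V \<and> r \<in> R} = row_space A"
    and ws_R: "\<And>l. measure M {\<omega> \<in> space M. transpose A *v ws l \<omega> \<in> R} = 1"
    and ws_nz: "\<And>l. measure M {\<omega> \<in> space M. transpose A *v ws l \<omega> \<noteq> 0} = 1"
  shows "AE \<omega> in M.
           ((\<forall>l. stop_time (\<lambda>k. transpose A *v ws k \<omega>) R l \<noteq> \<infinity>) \<and>
            (\<lambda>l. \<Prod>j=1..l. gamma (\<lambda>k. transpose A *v ws k \<omega>) R j) \<longlonglongrightarrow> 0)
           \<longrightarrow> (((\<lambda>k. A *v iterate A b (\<lambda>k. ws k \<omega>) x0 k) \<longlonglongrightarrow> b)
                \<longleftrightarrow> orth_proj V x0 = orth_proj V xs)"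
proof -
  interpret prob_space M by fact
  have R: "subspace R"
    unfolding R_def by (rule subspace_orthogonal_comp)
  have "AE \<omega> in M. \<forall>l. transpose A *v ws l \<omega> \<in> R"
    by (rule AE_all_prob_1) (rule ws_R)
  moreover have "AE \<omega> in M. \<forall>l. transpose A *v ws l \<omega> \<noteq> 0"
    by (rule AE_all_prob_1) (rule ws_nz)
  ultimately show ?thesis
  proof eventually_elim
    case (elim \<omega>)
    then show ?case
      using iterate_tendsto_iff_orth_proj_eq[OF sol R V_sub V_orth V_sum(2), of "\<lambda>k. ws k \<omega>"]
      by blast
  qed
qed

end
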